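(* Let $k\ge 2$ be an integer, $X$ a locally finite poset and $F$ a field admitting a primitive $(k-1)$-th root of unity. Then $f\in I(X,F)$ satisfies $f^k=f$ if and only if $f=\sigma d\sigma^{-1}$ for some invertible $\sigma\in I(X,F)$ and some diagonal $d\in I(X,F)$ each of whose diagonal entries $d(x,x)$ is either $0$ or a $(k-1)$-th root of unity in $F$.
   Context: $I(X,F)$ is the incidence algebra of the locally finite poset $X$ over $F$: functions $f:X\times X\to F$ vanishing unless $x\le y$, with product $(fg)(x,y)=\sum_{x\le z\le y}f(x,z)g(z,y)$. An element $d$ is diagonal if $d(x,y)=0$ whenever $x\ne y$. *)

theory Defs
  imports Main
begin

text \<open>The poset X is the universe of a type of class order; local finiteness is an explicit
assumption in the statement.\<close>

definition incidence_algebra :: "('a::order \<Rightarrow> 'a \<Rightarrow> 'b::field) set" where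
  "incidence_algebra = {f. \<forall>x y. \<not> x \<le> y \<longrightarrow> f x y = 0}"

definition locally_finite_poset :: "'a::order itself \<Rightarrow> bool" where
  "locally_finite_poset _ \<longleftrightarrow> (\<forall>x y::'a. finite {x..y})"

definition inc_mult :: "('a::order \<Rightarrow> 'a \<Rightarrow> 'b::field) \<Rightarrow> ('a \<Rightarrow> 'a \<Rightarrow> 'b) \<Rightarrow> ('a \<Rightarrow> 'a \<Rightarrow> 'b)" where
  "inc_mult f g = (\<lambda>x y. \<Sum>z\<in>{x..y}. f x z * g z y)"

definition inc_one :: "'a::order \<Rightarrow> 'a \<Rightarrow> 'b::field" where
  "inc_one = (\<lambda>x y. if x = y then 1 else 0)"

primrec inc_pow :: "('a::order \<Rightarrow> 'a \<Rightarrow> 'b::field) \<Rightarrow> nat \<Rightarrow> ('a \<Rightarrow> 'a \<Rightarrow> 'b)" where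
  "inc_pow f 0 = inc_one"
| "inc_pow f (Suc n) = inc_mult f (inc_pow f n)"

definition is_diagonal :: "('a \<Rightarrow> 'a \<Rightarrow> 'b::zero) \<Rightarrow> bool" where
  "is_diagonal d \<longleftrightarrow> (\<forall>x y. x \<noteq> y \<longrightarrow> d x y = 0)"

definition primitive_root_of_unity :: "nat \<Rightarrow> 'b::field \<Rightarrow> bool" where
  "primitive_root_of_unity n \<omega> \<longleftrightarrow> \<omega> ^ n = 1 \<and> (\<forall>j. 0 < j \<and> j < n \<longrightarrow> \<omega> ^ j \<noteq> 1)"

end

theory Submission
  imports Defs "HOL-Computational_Algebra.Primes"
begin

text \<open>Write \<open>n = k - 1\<close>; a primitive \<open>n\<close>-th root of unity forces \<open>n \<noteq> 0\<close> in \<open>F\<close>.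
If \<open>f\<^sup>k = f\<close>, every diagonal entry \<open>f(y,y)\<close> is \<open>0\<close> or an \<open>n\<close>-th root of unity, and column \<open>y\<close>
of the eigenprojection of \<open>f\<close> for the eigenvalue \<open>f(y,y)\<close> is an eigenvector with entry \<open>1\<close> at \<open>y\<close>.
Assembling these columns gives a unitriangular \<open>\<sigma>\<close> with \<open>f \<sigma> = \<sigma> d\<close>, \<open>d\<close> the diagonal of \<open>f\<close>;
\<open>\<sigma>\<close> is invertible because the Neumann series of \<open>1 - \<sigma>\<close> is finite on every interval.
Conversely \<open>(\<sigma> d \<sigma>\<inverse>)\<^sup>k = \<sigma> d\<^sup>k \<sigma>\<inverse>\<close> and \<open>d\<^sup>k = d\<close> entrywise.\<close>

lemma locally_finite_posetD:
  "locally_finite_poset TYPE('a::order) \<Longrightarrow> finite {x..y::'a}"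
  by (simp add: locally_finite_poset_def)

lemma incidence_algebraD:
  "f \<in> incidence_algebra \<Longrightarrow> \<not> x \<le> y \<Longrightarrow> f x y = 0"
  by (simp add: incidence_algebra_def)

lemma inc_mult_in_incidence_algebra: "inc_mult f g \<in> incidence_algebra"
  by (auto simp: incidence_algebra_def inc_mult_def)

lemma inc_one_in_incidence_algebra: "inc_one \<in> incidence_algebra"
  by (auto simp: incidence_algebra_def inc_one_def)

lemma inc_pow_in_incidence_algebra: "inc_pow f n \<in> incidence_algebra"
  by (cases n) (simp_all add: inc_one_in_incidence_algebra inc_mult_in_incidence_algebra)

lemma inc_mult_diagonal_entry: "inc_mult f g x x = f x x * g x x"
  by (simp add: inc_mult_def)

lemma inc_pow_diagonal_entry: "inc_pow f n x x = f x x ^ n"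
  by (induction n) (simp_all add: inc_one_def inc_mult_diagonal_entry)

lemma inc_mult_diagonal_right:
  fixes g :: "'a::order \<Rightarrow> 'a \<Rightarrow> 'b::field"
  assumes LF: "locally_finite_poset TYPE('a)"
    and g: "g \<in> incidence_algebra" and d: "is_diagonal d"
  shows "inc_mult g d x y = g x y * d y y"
proof -
  have "inc_mult g d x y = (\<Sum>z\<in>{x..y}. if z = y then g x y * d y y else 0)"
    unfolding inc_mult_def using d by (intro sum.cong) (auto simp: is_diagonal_def)
  also have "\<dots> = g x y * d y y"
    using locally_finite_posetD[OF LF, of x y] g by (auto simp: incidence_algebraD)
  finally show ?thesis .
qed

lemma inc_mult_diagonal_left:
  fixes g :: "'a::order \<Rightarrow> 'a \<Rightarrow> 'b::field"
  assumes LF: "locally_finite_poset TYPE('a)"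
    and g: "g \<in> incidence_algebra" and d: "is_diagonal d"
  shows "inc_mult d g x y = d x x * g x y"
proof -
  have "inc_mult d g x y = (\<Sum>z\<in>{x..y}. if z = x then d x x * g x y else 0)"
    unfolding inc_mult_def using d by (intro sum.cong) (auto simp: is_diagonal_def)
  also have "\<dots> = d x x * g x y"
    using locally_finite_posetD[OF LF, of x y] g by (auto simp: incidence_algebraD)
  finally show ?thesis .
qed

lemma inc_one_diagonal: "is_diagonal inc_one"
  by (simp add: is_diagonal_def inc_one_def)

lemma inc_mult_one_right:
  fixes f :: "'a::order \<Rightarrow> 'a \<Rightarrow> 'b::field"
  assumes "locally_finite_poset TYPE('a)" and "f \<in> incidence_algebra"
  shows "inc_mult f inc_one = f"
  using inc_mult_diagonal_right[OF assms inc_one_diagonal] by (simp add: fun_eq_iff inc_one_def)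

lemma inc_mult_one_left:
  fixes f :: "'a::order \<Rightarrow> 'a \<Rightarrow> 'b::field"
  assumes "locally_finite_poset TYPE('a)" and "f \<in> incidence_algebra"
  shows "inc_mult inc_one f = f"
  using inc_mult_diagonal_left[OF assms inc_one_diagonal] by (simp add: fun_eq_iff inc_one_def)

lemma inc_pow_1:
  fixes f :: "'a::order \<Rightarrow> 'a \<Rightarrow> 'b::field"
  assumes "locally_finite_poset TYPE('a)" and "f \<in> incidence_algebra"
  shows "inc_pow f 1 = f"
  using inc_mult_one_right[OF assms] by simp

lemma inc_mult_assoc:
  fixes f g h :: "'a::order \<Rightarrow> 'a \<Rightarrow> 'b::field"
  assumes LF: "locally_finite_poset TYPE('a)" and g: "g \<in> incidence_algebra"
  shows "inc_mult (inc_mult f g) h = inc_mult f (inc_mult g h)"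
proof (intro ext)
  fix x y :: 'a
  let ?I = "{x..y}"
  have fin: "finite ?I" using locally_finite_posetD[OF LF] .
  \<comment> \<open>both inner sums may be taken over the whole interval, since g vanishes off the order\<close>
  have left: "(\<Sum>w\<in>{x..z}. f x w * g w z) = (\<Sum>w\<in>?I. f x w * g w z)" if "z \<in> ?I" for z
    by (rule sum.mono_neutral_left) (use that g fin in \<open>auto simp: incidence_algebraD\<close>)
  have right: "(\<Sum>z\<in>{w..y}. g w z * h z y) = (\<Sum>z\<in>?I. g w z * h z y)" if "w \<in> ?I" for w
    by (rule sum.mono_neutral_left) (use that g fin in \<open>auto simp: incidence_algebraD\<close>)
  have "inc_mult (inc_mult f g) h x y = (\<Sum>z\<in>?I. \<Sum>w\<in>?I. f x w * g w z * h z y)"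
    unfolding inc_mult_def using left by (simp add: sum_distrib_right)
  also have "\<dots> = (\<Sum>w\<in>?I. \<Sum>z\<in>?I. f x w * g w z * h z y)"
    by (rule sum.swap)
  also have "\<dots> = inc_mult f (inc_mult g h) x y"
    unfolding inc_mult_def using right by (simp add: sum_distrib_left mult.assoc)
  finally show "inc_mult (inc_mult f g) h x y = inc_mult f (inc_mult g h) x y" .
qed

lemma inc_mult_sum_right:
  "inc_mult f (\<lambda>x y. \<Sum>i\<in>I. g i x y) x y = (\<Sum>i\<in>I. inc_mult f (g i) x y)"
  by (simp add: inc_mult_def sum_distrib_left sum.swap[of _ I])

lemma inc_mult_scale_right:
  "inc_mult f (\<lambda>x y. c * g x y) x y = c * inc_mult f g x y"
  by (simp add: inc_mult_def sum_distrib_left mult.left_commute)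

lemma inc_mult_diff_right:
  "inc_mult f (\<lambda>x y. g x y - h x y) x y = inc_mult f g x y - inc_mult f h x y"
  by (simp add: inc_mult_def right_diff_distrib sum_subtractf)

lemma inc_mult_diff_left:
  "inc_mult (\<lambda>x y. g x y - h x y) k x y = inc_mult g k x y - inc_mult h k x y"
  by (simp add: inc_mult_def left_diff_distrib sum_subtractf)

section \<open>Unitriangular elements are invertible\<close>

lemma inc_pow_vanishes_if_zero_diagonal:
  fixes N :: "'a::order \<Rightarrow> 'a \<Rightarrow> 'b::field"
  assumes LF: "locally_finite_poset TYPE('a)"
    and N: "N \<in> incidence_algebra" and N0: "\<And>x. N x x = 0"
    and j: "card {x..y} \<le> j"
  shows "inc_pow N j x y = 0"
  using j
proof (induction j arbitrary: x)
  case 0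
  then have "\<not> x \<le> y" using locally_finite_posetD[OF LF, of x y] by auto
  then show ?case by (simp add: inc_one_def)
next
  case (Suc j)
  have "N x z * inc_pow N j z y = 0" if z: "z \<in> {x..y}" for z
  proof (cases "z = x")
    case False
    with z have "{z..y} \<subset> {x..y}" by auto
    then have "card {z..y} < card {x..y}"
      using locally_finite_posetD[OF LF] by (simp add: psubset_card_mono)
    with Suc show ?thesis by simp
  qed (simp add: N0)
  then show ?case by (simp add: inc_mult_def del: mult_eq_0_iff)
qed

lemma unitriangular_right_inverse:
  fixes s :: "'a::order \<Rightarrow> 'a \<Rightarrow> 'b::field"
  assumes LF: "locally_finite_poset TYPE('a)"
    and s: "s \<in> incidence_algebra" and s1: "\<And>x. s x x = 1"
  obtains t where "t \<in> incidence_algebra" "inc_mult s t = inc_one" "\<And>x. t x x = 1"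
proof
  \<comment> \<open>the Neumann series of \<open>N = 1 - s\<close>, which is finite on every interval\<close>
  define N where "N x y = inc_one x y - s x y" for x y
  have N: "N \<in> incidence_algebra"
    using s by (auto simp: incidence_algebra_def N_def inc_one_def)
  have N_vanishes: "inc_pow N j x y = 0" if "card {x..y} \<le> j" for j x y
    using inc_pow_vanishes_if_zero_diagonal[OF LF N _ that] s1 by (simp add: N_def inc_one_def)
  define t where "t x y = (\<Sum>j<card {x..y}. inc_pow N j x y)" for x y
  show "t \<in> incidence_algebra" "\<And>x. t x x = 1"
    by (auto simp: incidence_algebra_def t_def inc_one_def)
  show "inc_mult s t = inc_one"
  proof (intro ext)
    fix x y :: 'a
    let ?M = "card {x..y}"
    have t_interval: "t z y = (\<Sum>j<?M. inc_pow N j z y)" if "z \<in> {x..y}" for z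
    proof -
      have "card {z..y} \<le> ?M"
        using that locally_finite_posetD[OF LF] by (intro card_mono) auto
      then show ?thesis
        unfolding t_def by (intro sum.mono_neutral_left) (auto intro: N_vanishes)
    qed
    have "inc_mult s t x y = inc_mult s (\<lambda>z y. \<Sum>j<?M. inc_pow N j z y) x y"
      unfolding inc_mult_def using t_interval by (intro sum.cong) auto
    also have "\<dots> = (\<Sum>j<?M. inc_mult (\<lambda>x y. inc_one x y - N x y) (inc_pow N j) x y)"
      by (simp add: inc_mult_sum_right N_def)
    also have "\<dots> = (\<Sum>j<?M. inc_pow N j x y - inc_pow N (Suc j) x y)"
      by (simp add: inc_mult_diff_left inc_mult_one_left[OF LF inc_pow_in_incidence_algebra])
    also have "\<dots> = inc_one x y"
      using sum_lessThan_telescope'[of "\<lambda>j. inc_pow N j x y" ?M] N_vanishes[of x y ?M]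
      by simp
    finally show "inc_mult s t x y = inc_one x y" .
  qed
qed

lemma unitriangular_invertible:
  fixes s :: "'a::order \<Rightarrow> 'a \<Rightarrow> 'b::field"
  assumes LF: "locally_finite_poset TYPE('a)"
    and s: "s \<in> incidence_algebra" and s1: "\<And>x. s x x = 1"
  obtains t where "t \<in> incidence_algebra" "inc_mult s t = inc_one" "inc_mult t s = inc_one"
proof -
  obtain t where t: "t \<in> incidence_algebra" "inc_mult s t = inc_one" "\<And>x. t x x = 1"
    using unitriangular_right_inverse[OF LF s s1] by blast
  obtain r where r: "r \<in> incidence_algebra" "inc_mult t r = inc_one"
    using unitriangular_right_inverse[OF LF t(1) t(3)] by blast
  have "s = inc_mult (inc_mult s t) r"
    using r inc_mult_one_right[OF LF s] inc_mult_assoc[OF LF t(1)] by simp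
  also have "\<dots> = r"
    using t(2) inc_mult_one_left[OF LF r(1)] by simp
  finally show ?thesis
    using that t r by blast
qed

lemma inc_pow_diagonal:
  fixes d :: "'a::order \<Rightarrow> 'a \<Rightarrow> 'b::field"
  assumes LF: "locally_finite_poset TYPE('a)" and d: "is_diagonal d"
  shows "inc_pow d m x y = (if x = y then d x x ^ m else 0)"
  by (induction m arbitrary: x y)
    (simp_all add: inc_one_def inc_mult_diagonal_left[OF LF inc_pow_in_incidence_algebra d])

lemma inc_pow_diagonal_Suc_eq_self:
  fixes d :: "'a::order \<Rightarrow> 'a \<Rightarrow> 'b::field"
  assumes LF: "locally_finite_poset TYPE('a)" and d: "is_diagonal d"
    and roots: "\<And>x. d x x = 0 \<or> d x x ^ n = 1"
  shows "inc_pow d (Suc n) = d"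
proof (intro ext)
  fix x y
  show "inc_pow d (Suc n) x y = d x y"
    using d roots[of x] by (auto simp: inc_pow_diagonal[OF LF d] is_diagonal_def simp del: inc_pow.simps)
qed

lemma inc_pow_conjugate:
  fixes \<sigma> \<tau> d :: "'a::order \<Rightarrow> 'a \<Rightarrow> 'b::field"
  assumes LF: "locally_finite_poset TYPE('a)"
    and \<sigma>: "\<sigma> \<in> incidence_algebra" and \<tau>: "\<tau> \<in> incidence_algebra"
    and d: "d \<in> incidence_algebra"
    and \<sigma>\<tau>: "inc_mult \<sigma> \<tau> = inc_one" and \<tau>\<sigma>: "inc_mult \<tau> \<sigma> = inc_one"
  shows "inc_pow (inc_mult (inc_mult \<sigma> d) \<tau>) m = inc_mult (inc_mult \<sigma> (inc_pow d m)) \<tau>"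
proof (induction m)
  case 0
  show ?case
    using \<sigma>\<tau> inc_mult_one_right[OF LF \<sigma>] by simp
next
  case (Suc m)
  have cancel: "inc_mult \<tau> (inc_mult \<sigma> g) = g" if "g \<in> incidence_algebra" for g
    using inc_mult_assoc[OF LF \<sigma>, of \<tau> g] \<tau>\<sigma> inc_mult_one_left[OF LF that] by simp
  show ?case
    using Suc \<sigma> \<tau> d
    by (simp add: inc_mult_assoc[OF LF] cancel inc_mult_in_incidence_algebra
        inc_pow_in_incidence_algebra)
qed

lemma of_nat_neq_0_if_primitive_root_of_unity:
  fixes \<omega> :: "'b::field"
  assumes n: "n \<ge> 1" and \<omega>: "primitive_root_of_unity n \<omega>"
  shows "of_nat n \<noteq> (0::'b)"
proof
  assume n0: "of_nat n = (0::'b)"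
  \<comment> \<open>then \<open>p = CHAR('b)\<close> divides \<open>n\<close>, and \<open>(\<omega>^(n/p) - 1)^p = \<omega>^n - 1 = 0\<close> contradicts primitivity\<close>
  let ?p = "CHAR('b)"
  have "?p > 0" using n n0 CHAR_pos_iff by (metis less_le_trans zero_less_one)
  then have p: "prime ?p" by (rule prime_CHAR_semidom)
  obtain m where m: "n = ?p * m"
    using n0 of_nat_eq_0_iff_char_dvd by blast
  have "0 < m" "m < n"
    using m n prime_gt_1_nat[OF p] by (auto intro: Nat.gr0I)
  define x where "x = \<omega> ^ m"
  have "x ^ ?p = 1"
    using \<omega> m by (simp add: x_def primitive_root_of_unity_def power_mult[symmetric] mult.commute)
  have "(x + (-1)) ^ ?p = x ^ ?p + (-1) ^ ?p"
    by (rule freshmans_dream[OF p refl])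
  also have "(-1::'b) ^ ?p = - (1 ^ ?p)"
    by (rule minus_power_prime_CHAR[OF refl p])
  finally have "(x - 1) ^ ?p = 0"
    using \<open>x ^ ?p = 1\<close> by simp
  then have "\<omega> ^ m = 1" by (simp add: x_def)
  then show False
    using \<omega> \<open>0 < m\<close> \<open>m < n\<close> by (auto simp: primitive_root_of_unity_def)
qed

section \<open>Eigenprojections of a solution of \<open>f\<^sup>n\<^sup>+\<^sup>1 = f\<close>\<close>

text \<open>If \<open>f\<^sup>n\<^sup>+\<^sup>1 = f\<close>, then \<open>1 - f\<^sup>n\<close> projects onto the kernel of \<open>f\<close>, and for an \<open>n\<close>-th root
of unity \<open>c\<close> the average \<open>(1/n) \<Sum>\<^sub>i\<^sub>=\<^sub>1\<^sub>.\<^sub>.\<^sub>n (f/c)\<^sup>i\<close> projects onto its \<open>c\<close>-eigenspace.\<close>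

definition eigenprojection ::
    "nat \<Rightarrow> ('a::order \<Rightarrow> 'a \<Rightarrow> 'b::field) \<Rightarrow> 'b \<Rightarrow> 'a \<Rightarrow> 'a \<Rightarrow> 'b" where
  "eigenprojection n f c =
    (if c = 0 then (\<lambda>x y. inc_one x y - inc_pow f n x y)
     else (\<lambda>x y. inverse (of_nat n) * (\<Sum>i=1..n. inverse c ^ i * inc_pow f i x y)))"

lemma eigenprojection_vanishes: "\<not> x \<le> y \<Longrightarrow> eigenprojection n f c x y = 0"
  by (simp add: eigenprojection_def inc_one_def
      incidence_algebraD[OF inc_pow_in_incidence_algebra])

lemma eigenprojection_diagonal_entry:
  fixes f :: "'a::order \<Rightarrow> 'a \<Rightarrow> 'b::field"
  assumes n: "n \<ge> 1" "of_nat n \<noteq> (0::'b)"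
  shows "eigenprojection n f (f x x) x x = 1"
proof (cases "f x x = 0")
  case True
  then show ?thesis
    using n by (simp add: eigenprojection_def inc_one_def inc_pow_diagonal_entry)
next
  case False
  have "inverse (f x x) ^ i * f x x ^ i = 1" for i
    using False by (simp flip: power_mult_distrib)
  then show ?thesis
    using False n by (simp add: eigenprojection_def inc_pow_diagonal_entry)
qed

lemma sum_atLeast1_atMost_shift_periodic:
  fixes g :: "nat \<Rightarrow> 'b::cancel_comm_monoid_add"
  assumes "g (Suc n) = g 1"
  shows "(\<Sum>i=1..n. g (Suc i)) = (\<Sum>i=1..n. g i)"
proof -
  have "(\<Sum>i=1..n. g (Suc i)) + g 1 = (\<Sum>i=Suc 1..Suc n. g i) + g 1"
    by (simp only: sum.shift_bounds_cl_Suc_ivl)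
  also have "\<dots> = (\<Sum>i=1..Suc n. g i)"
    by (simp add: sum.atLeast_Suc_atMost[of "Suc 0" "Suc n"] add.commute del: sum.cl_ivl_Suc)
  also have "\<dots> = (\<Sum>i=1..n. g i) + g (Suc n)"
    by simp
  finally show ?thesis
    using assms by simp
qed

lemma inc_mult_eigenprojection:
  fixes f :: "'a::order \<Rightarrow> 'a \<Rightarrow> 'b::field"
  assumes LF: "locally_finite_poset TYPE('a)" and f: "f \<in> incidence_algebra"
    and periodic: "inc_pow f (Suc n) = f" and root: "c = 0 \<or> c ^ n = 1"
  shows "inc_mult f (eigenprojection n f c) x y = c * eigenprojection n f c x y"
proof (cases "c = 0")
  case True
  then show ?thesis
    using periodic by (simp add: eigenprojection_def inc_mult_diff_right inc_mult_one_right[OF LF f])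
next
  case False
  define g where "g i = inverse c ^ i * inc_pow f i x y" for i
  have "g (Suc n) = g 1"
    using root False periodic inc_pow_1[OF LF f]
    by (simp add: g_def power_inverse del: inc_pow.simps)
  then have "(\<Sum>i=1..n. g (Suc i)) = (\<Sum>i=1..n. g i)"
    by (rule sum_atLeast1_atMost_shift_periodic)
  moreover have "inverse c ^ i * inc_pow f (Suc i) x y = c * g (Suc i)" for i
    using False by (simp add: g_def del: inc_pow.simps)
  then have "inc_mult f (eigenprojection n f c) x y
      = inverse (of_nat n) * (c * (\<Sum>i=1..n. g (Suc i)))"
    using False by (simp add: eigenprojection_def inc_mult_scale_right inc_mult_sum_right
        sum_distrib_left)
  ultimately show ?thesis
    using False by (simp add: eigenprojection_def g_def)
qed

lemma periodic_conjugate_to_diagonal: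
  fixes f :: "'a::order \<Rightarrow> 'a \<Rightarrow> 'b::field"
  assumes LF: "locally_finite_poset TYPE('a)" and f: "f \<in> incidence_algebra"
    and n: "n \<ge> 1" "of_nat n \<noteq> (0::'b)" and periodic: "inc_pow f (Suc n) = f"
  obtains \<sigma> \<tau> d where "\<sigma> \<in> incidence_algebra" "\<tau> \<in> incidence_algebra"
    "inc_mult \<sigma> \<tau> = inc_one" "inc_mult \<tau> \<sigma> = inc_one"
    "d \<in> incidence_algebra" "is_diagonal d" "\<And>x. d x x = 0 \<or> d x x ^ n = 1"
    "f = inc_mult (inc_mult \<sigma> d) \<tau>"
proof -
  have roots: "f x x = 0 \<or> f x x ^ n = 1" for x
    using inc_pow_diagonal_entry[of f "Suc n" x] periodic by auto
  define \<sigma> where "\<sigma> x y = eigenprojection n f (f y y) x y" for x y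
  define d where "d x y = (if x = y then f x x else 0)" for x y
  have \<sigma>: "\<sigma> \<in> incidence_algebra"
    by (simp add: incidence_algebra_def \<sigma>_def eigenprojection_vanishes)
  moreover have d: "d \<in> incidence_algebra" "is_diagonal d"
    by (auto simp: incidence_algebra_def is_diagonal_def d_def)
  moreover have "\<sigma> x x = 1" for x
    using eigenprojection_diagonal_entry[OF n] by (simp add: \<sigma>_def)
  then obtain \<tau> where \<tau>: "\<tau> \<in> incidence_algebra"
    "inc_mult \<sigma> \<tau> = inc_one" "inc_mult \<tau> \<sigma> = inc_one"
    using unitriangular_invertible[OF LF \<sigma>] by blast
  moreover have "inc_mult f \<sigma> = inc_mult \<sigma> d"
  proof (intro ext)
    fix x y
    have "inc_mult f \<sigma> x y = inc_mult f (eigenprojection n f (f y y)) x y"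
      by (simp add: inc_mult_def \<sigma>_def)
    also have "\<dots> = \<sigma> x y * d y y"
      using inc_mult_eigenprojection[OF LF f periodic roots] by (simp add: \<sigma>_def d_def)
    also have "\<dots> = inc_mult \<sigma> d x y"
      by (simp add: inc_mult_diagonal_right[OF LF \<sigma> d(2)])
    finally show "inc_mult f \<sigma> x y = inc_mult \<sigma> d x y" .
  qed
  then have "f = inc_mult (inc_mult \<sigma> d) \<tau>"
    using \<tau> inc_mult_one_right[OF LF f] inc_mult_assoc[OF LF \<sigma>, of f \<tau>] by simp
  moreover have "d x x = 0 \<or> d x x ^ n = 1" for x
    using roots by (simp add: d_def)
  ultimately show ?thesis
    using that by blast
qed

theorem propositionA4:
  fixes k :: nat and f :: "'a::order \<Rightarrow> 'a \<Rightarrow> 'b::field"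
  assumes "k \<ge> 2"
    and "locally_finite_poset TYPE('a)"
    and "\<exists>\<omega>::'b. primitive_root_of_unity (k - 1) \<omega>"
    and "f \<in> incidence_algebra"
  shows "inc_pow f k = f \<longleftrightarrow>
    (\<exists>\<sigma> \<tau> d. \<sigma> \<in> incidence_algebra \<and> \<tau> \<in> incidence_algebra
       \<and> inc_mult \<sigma> \<tau> = inc_one \<and> inc_mult \<tau> \<sigma> = inc_one
       \<and> d \<in> incidence_algebra \<and> is_diagonal d
       \<and> (\<forall>x. d x x = 0 \<or> d x x ^ (k - 1) = 1)
       \<and> f = inc_mult (inc_mult \<sigma> d) \<tau>)"
    (is "_ \<longleftrightarrow> ?conjugate")
proof -
  obtain n where k: "k = Suc n" and n: "n \<ge> 1"
    using assms(1) by (cases k) auto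
  have "of_nat n \<noteq> (0::'b)"
    using assms(3) of_nat_neq_0_if_primitive_root_of_unity[OF n] by (auto simp: k)
  show ?thesis
  proof
    assume "inc_pow f k = f"
    then show ?conjugate
      using periodic_conjugate_to_diagonal[OF assms(2,4) n \<open>of_nat n \<noteq> 0\<close>] by (simp add: k) metis
  next
    assume ?conjugate
    then obtain \<sigma> \<tau> d where conj: "\<sigma> \<in> incidence_algebra" "\<tau> \<in> incidence_algebra"
        "d \<in> incidence_algebra" "inc_mult \<sigma> \<tau> = inc_one" "inc_mult \<tau> \<sigma> = inc_one"
      and diag: "is_diagonal d" "\<forall>x. d x x = 0 \<or> d x x ^ n = 1"
      and f: "f = inc_mult (inc_mult \<sigma> d) \<tau>"
      by (auto simp: k)
    have "inc_pow f k = inc_mult (inc_mult \<sigma> (inc_pow d (Suc n))) \<tau>"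
      unfolding f k by (rule inc_pow_conjugate[OF assms(2) conj])
    also have "\<dots> = f"
      using inc_pow_diagonal_Suc_eq_self[OF assms(2) diag(1)] diag(2) f by simp
    finally show "inc_pow f k = f" .
  qed
qed

end
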